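(* Let $M$ be a commutative free monoid on countably many generators $a_1,a_2,\ldots$, with a monoid homomorphism $\deg:M\to(\mathbb Z_{\ge0},+)$ such that $\deg^{-1}(0)=\{1\}$ and $\deg^{-1}(d)$ is finite for all $d>0$. For every type $\tau$, in the monoid ring $\mathbb Z[M]$ (resp. $\mathbb Z[M]\otimes\mathbb Q$) $$S_\tau=\sum_{\lambda}a(\lambda,\tau)X_\lambda\qquad\text{and}\qquad X_\tau=\sum_\lambda a^{-1}(\lambda,\tau)S_\lambda,$$ the sums over types $\lambda$ of the same degree as $\tau$. In particular $\#\{b\in M: b\text{ has type }\lambda\}=\sum_\tau a^{-1}(\tau,\lambda)\prod_{(k,m)\in\tau}\#\{b\in M:\deg b=k\}$.
   Context: Each $b\in M$ can be written uniquely up to order as $b=a_{i_1}^{k_1}\cdots a_{i_n}^{k_n}$ with distinct generators and $k_j\ge1$; its type is the multiset $\{(\deg a_{i_1},k_1),\dots,(\deg a_{i_n},k_n)\}$. In general a type of degree $d$ is a finite multiset of pairs $(b,m)$ of positive integers with $\sum bm=d$. $\psi_m:\mathbb Z[M]\to\mathbb Z[M]$ is the ring endomorphism with $\psi_m(a_k)=a_k^m$. $X_\tau\in\mathbb Z[M]$ is the sum of all elements of $M$ of type $\tau$, and $S_\tau=\prod_{(k,m)\in\tau}\psi_m\big(\sum_{b\in\deg^{-1}(k)}b\big)$. For types $\lambda=\{(b_i,m_i)\}_{i\le r}$ and $\tau=\{(c_j,n_j)\}_{j\le s}$ (fixed orderings), an arrangement of $\lambda$ into $\tau$ is an $r\times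 s$ non-negative integer matrix $A$ with $A\vec n=\vec m$ and $A^T\vec b=\vec c$; $a(\lambda,\tau)$ is the number of arrangements. The matrix $(a(\lambda,\tau))$ indexed by types of degree $d$ is invertible over $\mathbb Q$, with inverse entries $a^{-1}(\lambda,\tau)$. *)

theory Defs
  imports Complex_Main "HOL-Library.Multiset" "HOL-Library.Poly_Mapping"
begin

(* The free commutative monoid M on generators a_1, a_2, ... is modelled as
  nat multiset (generator indices with multiplicities, monoid operation +, unit the empty multiset).
  The monoid ring Z[M] (resp. Q[M]) is  nat multiset =>0 int (resp. rat),
  whose multiplication is convolution. *)

type_synonym mon = "nat multiset"
type_synonym mtype = "(nat \<times> nat) multiset"

definition mono :: "mon \<Rightarrow> (mon \<Rightarrow>\<^sub>0 'r::comm_ring_1)" where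
  "mono b = Poly_Mapping.single b 1"

definition psi :: "nat \<Rightarrow> (mon \<Rightarrow>\<^sub>0 'r::comm_ring_1) \<Rightarrow> (mon \<Rightarrow>\<^sub>0 'r)" where
  "psi m f = (\<Sum>b\<in>Poly_Mapping.keys f. Poly_Mapping.single (repeat_mset m b) (Poly_Mapping.lookup f b))"

definition type_of :: "(mon \<Rightarrow> nat) \<Rightarrow> mon \<Rightarrow> mtype" where
  "type_of deg b = image_mset (\<lambda>i. (deg {#i#}, count b i)) (mset_set (set_mset b))"

definition tdeg :: "mtype \<Rightarrow> nat" where
  "tdeg \<tau> = (\<Sum>(b, m)\<in>#\<tau>. b * m)"

definition is_type :: "mtype \<Rightarrow> bool" where
  "is_type \<tau> \<longleftrightarrow> (\<forall>(b, m)\<in>#\<tau>. 0 < b \<and> 0 < m)"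

definition types_of_deg :: "nat \<Rightarrow> mtype set" where
  "types_of_deg d = {\<tau>. is_type \<tau> \<and> tdeg \<tau> = d}"

definition X :: "(mon \<Rightarrow> nat) \<Rightarrow> mtype \<Rightarrow> (mon \<Rightarrow>\<^sub>0 'r::comm_ring_1)" where
  "X deg \<tau> = (\<Sum>b\<in>{b. type_of deg b = \<tau>}. mono b)"

definition S :: "(mon \<Rightarrow> nat) \<Rightarrow> mtype \<Rightarrow> (mon \<Rightarrow>\<^sub>0 'r::comm_ring_1)" where
  "S deg \<tau> = (\<Prod>(k, m)\<in>#\<tau>. psi m (\<Sum>b\<in>{b. deg b = k}. mono b))"

definition arrangements_list :: "(nat \<times> nat) list \<Rightarrow> (nat \<times> nat) list \<Rightarrow> (nat \<Rightarrow> nat \<Rightarrow> nat) set" where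
  "arrangements_list lam tau =
     {A. (\<forall>i j. (length lam \<le> i \<or> length tau \<le> j) \<longrightarrow> A i j = 0)
       \<and> (\<forall>i<length lam. (\<Sum>j<length tau. A i j * snd (tau ! j)) = snd (lam ! i))
       \<and> (\<forall>j<length tau. (\<Sum>i<length lam. A i j * fst (lam ! i)) = fst (tau ! j))}"

definition arr :: "mtype \<Rightarrow> mtype \<Rightarrow> nat" where
  "arr lam tau = card (arrangements_list (SOME xs. mset xs = lam) (SOME ys. mset ys = tau))"

definition is_arr_inverse :: "nat \<Rightarrow> (mtype \<Rightarrow> mtype \<Rightarrow> rat) \<Rightarrow> bool" where
  "is_arr_inverse d g \<longleftrightarrow>
     (\<forall>l\<in>types_of_deg d. \<forall>t\<in>types_of_deg d.
        (\<Sum>u\<in>types_of_deg d. of_nat (arr l u) * g u t) = (if l = t then 1 else 0)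
      \<and> (\<Sum>u\<in>types_of_deg d. g l u * of_nat (arr u t)) = (if l = t then 1 else 0))
   \<and> (\<forall>l t. l \<notin> types_of_deg d \<or> t \<notin> types_of_deg d \<longrightarrow> g l t = 0)"

definition arr_inv :: "mtype \<Rightarrow> mtype \<Rightarrow> rat" where
  "arr_inv l t = (THE g. is_arr_inverse (tdeg t) g) l t"

end

theory Submission
  imports Defs "Jordan_Normal_Form.Determinant" "HOL-Combinatorics.List_Permutation"
begin

(* Fix an ordering (c_1, n_1), ..., (c_s, n_s) of tau. Expanding the product defining S_tau gives the
  sum of b_1^n_1 * ... * b_s^n_s over all tuples of monomials with deg b_j = c_j. If a monomial x has
  the distinct generators g_1, ..., g_r, the tuples producing x correspond bijectively to the
  arrangements of type(x) into tau, the entry (i, j) being the exponent of g_i in b_j; this gives the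
  first identity. The arrangement matrix is triangular with respect to the order "larger total
  multiplicity sum m first, then fewer parts" and has a nonzero diagonal, so it is invertible over Q,
  and inverting the first identity gives the second. Applying the augmentation that sends every
  monomial to 1 turns the second identity into the count of elements of a given type. *)

locale monoid_degree =
  fixes deg :: "nat multiset \<Rightarrow> nat"
  assumes deg_empty: "deg {#} = 0"
    and deg_plus: "\<And>x y. deg (x + y) = deg x + deg y"
    and deg_eq_0_iff: "{b. deg b = 0} = { {#} }"
    and finite_deg_eq_pos: "\<And>d. 0 < d \<Longrightarrow> finite {b. deg b = d}"
begin

lemma deg_repeat_mset: "deg (repeat_mset n b) = n * deg b"
  by (induct n) (auto simp: deg_plus deg_empty)

lemma deg_replicate_mset: "deg (replicate_mset n g) = n * deg {#g#}"
  using deg_repeat_mset[of n "{#g#}"] by simp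

lemma deg_sum: "deg (sum f A) = (\<Sum>a\<in>A. deg (f a))"
  by (induct A rule: infinite_finite_induct) (auto simp: deg_plus deg_empty)

lemma deg_singleton_pos: "0 < deg {#i#}"
proof (rule ccontr)
  assume "\<not> 0 < deg {#i#}"
  then have "{#i#} \<in> {b. deg b = 0}" by simp
  then show False using deg_eq_0_iff by simp
qed

lemma finite_deg_eq: "finite {b. deg b = d}"
  using finite_deg_eq_pos[of d] deg_eq_0_iff by (cases "d = 0") auto

lemma deg_eq_sum_count:
  assumes "finite G" "set_mset b \<subseteq> G"
  shows "deg b = (\<Sum>g\<in>G. count b g * deg {#g#})"
proof -
  have "b = (\<Sum>g\<in>G. replicate_mset (count b g) g)"
    using assms by (intro multiset_eqI) (auto simp: count_sum count_eq_zero_iff)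
  then have "deg b = deg (\<Sum>g\<in>G. replicate_mset (count b g) g)" by (rule arg_cong)
  also have "\<dots> = (\<Sum>g\<in>G. count b g * deg {#g#})" by (simp add: deg_sum deg_replicate_mset)
  finally show ?thesis .
qed

lemma tdeg_type_of: "tdeg (type_of deg b) = deg b"
proof -
  have "tdeg (type_of deg b) = (\<Sum>i\<in>set_mset b. deg {#i#} * count b i)"
    unfolding tdeg_def type_of_def by (simp add: sum_unfold_sum_mset image_mset.compositionality o_def)
  also have "\<dots> = deg b" using deg_eq_sum_count[of "set_mset b" b] by (simp add: mult.commute)
  finally show ?thesis .
qed

lemma is_type_type_of: "is_type (type_of deg b)"
  unfolding is_type_def type_of_def using deg_singleton_pos by auto

end

lemma size_le_tdeg:
  assumes "is_type \<tau>"
  shows "size \<tau> \<le> tdeg \<tau>"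
proof -
  have "size \<tau> = (\<Sum>p\<in>#\<tau>. (1::nat))" by (induct \<tau>) auto
  also have "\<dots> \<le> tdeg \<tau>"
    unfolding tdeg_def using assms by (intro sum_mset_mono) (auto simp: is_type_def Suc_le_eq)
  finally show ?thesis .
qed

lemma mem_type_le_tdeg:
  assumes "(b, m) \<in># \<tau>" "is_type \<tau>"
  shows "b \<le> tdeg \<tau>" "m \<le> tdeg \<tau>"
proof -
  obtain \<rho> where "\<tau> = add_mset (b, m) \<rho>" using assms(1) by (metis multi_member_split)
  then have "b * m \<le> tdeg \<tau>" by (simp add: tdeg_def)
  moreover have "b \<le> b * m" "m \<le> b * m" using assms by (auto simp: is_type_def)
  ultimately show "b \<le> tdeg \<tau>" "m \<le> tdeg \<tau>" by linarith+
qed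

lemma finite_types_of_deg: "finite (types_of_deg d)"
proof (rule finite_subset)
  show "types_of_deg d \<subseteq> (\<Union>n\<le>d. multisets_of_size ({0..d} \<times> {0..d}) n)"
  proof
    fix t assume "t \<in> types_of_deg d"
    then have t: "is_type t" "tdeg t = d" by (auto simp: types_of_deg_def)
    then have "set_mset t \<subseteq> {0..d} \<times> {0..d}" using mem_type_le_tdeg by fastforce
    then show "t \<in> (\<Union>n\<le>d. multisets_of_size ({0..d} \<times> {0..d}) n)"
      using size_le_tdeg[OF t(1)] t(2) by (auto simp: multisets_of_size_def)
  qed
qed auto

lemma mono_add: "mono (a + b) = (mono a * mono b :: _ \<Rightarrow>\<^sub>0 'r::comm_ring_1)"
  by (simp add: mono_def mult_single)

lemma lookup_sum_mono:
  "finite B \<Longrightarrow> Poly_Mapping.lookup (\<Sum>b\<in>B. mono b :: _ \<Rightarrow>\<^sub>0 'r::comm_ring_1) x = (if x \<in> B then 1 else 0)"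
  by (simp add: mono_def lookup_sum lookup_single when_def)

lemma psi_sum_mono:
  assumes "finite B"
  shows "psi m (\<Sum>b\<in>B. mono b :: _ \<Rightarrow>\<^sub>0 'r::comm_ring_1) = (\<Sum>b\<in>B. mono (repeat_mset m b))"
proof -
  let ?f = "\<Sum>b\<in>B. mono b :: _ \<Rightarrow>\<^sub>0 'r"
  have "psi m ?f = (\<Sum>b\<in>B. Poly_Mapping.single (repeat_mset m b) (Poly_Mapping.lookup ?f b))"
    unfolding psi_def using assms
    by (intro sum.mono_neutral_left) (auto simp: in_keys_iff lookup_sum_mono split: if_splits)
  also have "\<dots> = (\<Sum>b\<in>B. mono (repeat_mset m b))"
    using assms by (intro sum.cong refl) (simp add: lookup_sum_mono, simp add: mono_def)
  finally show ?thesis .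
qed

definition deg_tuples :: "(mon \<Rightarrow> nat) \<Rightarrow> (nat \<times> nat) list \<Rightarrow> mon list set" where
  "deg_tuples deg ys = {bs. length bs = length ys \<and> (\<forall>j<length ys. deg (bs ! j) = fst (ys ! j))}"

definition tuple_mono :: "(nat \<times> nat) list \<Rightarrow> mon list \<Rightarrow> mon" where
  "tuple_mono ys bs = (\<Sum>j<length ys. repeat_mset (snd (ys ! j)) (bs ! j))"

lemma deg_tuples_Nil: "deg_tuples deg [] = {[]}"
  by (auto simp: deg_tuples_def)

lemma deg_tuples_Cons:
  "deg_tuples deg (p # ys) = (\<lambda>(b, bs). b # bs) ` ({b. deg b = fst p} \<times> deg_tuples deg ys)"
proof (rule Set.set_eqI)
  fix cs
  show "cs \<in> deg_tuples deg (p # ys) \<longleftrightarrow> cs \<in> (\<lambda>(b, bs). b # bs) ` ({b. deg b = fst p} \<times> deg_tuples deg ys)"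
  proof (cases cs)
    case (Cons c cs')
    have "cs \<in> deg_tuples deg (p # ys) \<longleftrightarrow> deg c = fst p \<and> cs' \<in> deg_tuples deg ys"
      unfolding Cons deg_tuples_def by (auto simp: less_Suc_eq_0_disj)
    then show ?thesis unfolding Cons by auto
  qed (auto simp: deg_tuples_def)
qed

lemma inj_on_Cons_pairs: "inj_on (\<lambda>(b, bs). b # bs) A"
  by (auto simp: inj_on_def)

lemma tuple_mono_Cons: "tuple_mono (p # ys) (b # bs) = repeat_mset (snd p) b + tuple_mono ys bs"
  unfolding tuple_mono_def length_Cons sum.lessThan_Suc_shift by simp

definition type_list :: "mtype \<Rightarrow> (nat \<times> nat) list" where
  "type_list \<tau> = (SOME xs. mset xs = \<tau>)"

lemma mset_type_list: "mset (type_list \<tau>) = \<tau>"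
  unfolding type_list_def by (rule someI_ex) (rule ex_mset)

lemma arr_type_list: "arr l \<tau> = card (arrangements_list (type_list l) (type_list \<tau>))"
  unfolding arr_def type_list_def ..

context monoid_degree
begin

lemma finite_deg_tuples: "finite (deg_tuples deg ys)"
  by (induct ys) (auto simp: deg_tuples_Nil deg_tuples_Cons finite_deg_eq)

lemma card_deg_tuples:
  "of_nat (card (deg_tuples deg ys)) = (\<Prod>(k, m)\<leftarrow>ys. of_nat (card {b. deg b = k}) :: 'a::comm_semiring_1)"
proof (induct ys)
  case (Cons p ys)
  then show ?case
    by (cases p) (simp add: deg_tuples_Cons card_image[OF inj_on_Cons_pairs] card_cartesian_product)
qed (simp add: deg_tuples_Nil)

lemma deg_tuple_mono: "bs \<in> deg_tuples deg ys \<Longrightarrow> deg (tuple_mono ys bs) = tdeg (mset ys)"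
proof (induct ys arbitrary: bs)
  case Nil then show ?case by (simp add: deg_tuples_Nil tuple_mono_def tdeg_def deg_empty)
next
  case (Cons p ys)
  then obtain b bs' where "bs = b # bs'" "deg b = fst p" "bs' \<in> deg_tuples deg ys"
    by (auto simp: deg_tuples_Cons)
  with Cons show ?case by (cases p) (simp add: tuple_mono_Cons deg_plus deg_repeat_mset tdeg_def)
qed

lemma prod_psi_eq_sum_deg_tuples:
  "(\<Prod>(k, m)\<leftarrow>ys. psi m (\<Sum>b\<in>{b. deg b = k}. mono b) :: _ \<Rightarrow>\<^sub>0 'r::comm_ring_1)
     = (\<Sum>bs\<in>deg_tuples deg ys. mono (tuple_mono ys bs))"
proof (induct ys)
  case Nil then show ?case by (simp add: deg_tuples_Nil tuple_mono_def mono_def)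
next
  case (Cons p ys)
  obtain k m where p: "p = (k, m)" by (cases p)
  have "(\<Sum>bs\<in>deg_tuples deg (p # ys). mono (tuple_mono (p # ys) bs) :: _ \<Rightarrow>\<^sub>0 'r)
      = (\<Sum>b\<in>{b. deg b = k}. \<Sum>bs\<in>deg_tuples deg ys. mono (repeat_mset m b) * mono (tuple_mono ys bs))"
    unfolding deg_tuples_Cons sum.reindex[OF inj_on_Cons_pairs]
    by (subst sum.cartesian_product) (simp add: p tuple_mono_Cons mono_add case_prod_unfold)
  also have "\<dots> = psi m (\<Sum>b\<in>{b. deg b = k}. mono b) * (\<Sum>bs\<in>deg_tuples deg ys. mono (tuple_mono ys bs))"
    by (simp add: psi_sum_mono finite_deg_eq sum_product)
  finally show ?case using Cons by (simp add: p)
qed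

lemma S_eq_sum_deg_tuples:
  "(S deg \<tau> :: _ \<Rightarrow>\<^sub>0 'r::comm_ring_1)
     = (\<Sum>bs\<in>deg_tuples deg (type_list \<tau>). mono (tuple_mono (type_list \<tau>) bs))"
proof -
  have "(S deg \<tau> :: _ \<Rightarrow>\<^sub>0 'r) = (\<Prod>(k, m)\<leftarrow>type_list \<tau>. psi m (\<Sum>b\<in>{b. deg b = k}. mono b))"
    unfolding S_def prod_mset_prod_list[symmetric] mset_map mset_type_list ..
  then show ?thesis by (simp only: prod_psi_eq_sum_deg_tuples)
qed

end

lemma ex_distinct_list_map_eq:
  assumes "finite A" "mset xs = image_mset f (mset_set A)"
  shows "\<exists>gs. distinct gs \<and> set gs = A \<and> map f gs = xs"
  using assms
proof (induct xs arbitrary: A)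
  case Nil then show ?case by (auto simp: mset_set_empty_iff)
next
  case (Cons y xs A)
  obtain a where a: "a \<in> A" "f a = y"
    using Cons.prems by (metis image_mset_add_mset finite_set_mset_mset_set imageE set_image_mset
        mset.simps(2) union_single_eq_member)
  have "mset xs = image_mset f (mset_set (A - {a}))"
    using Cons.prems a by (simp add: mset_set.remove)
  then obtain gs where "distinct gs" "set gs = A - {a}" "map f gs = xs"
    using Cons.hyps[of "A - {a}"] Cons.prems(1) by auto
  with a show ?case by (intro exI[of _ "a # gs"]) auto
qed

definition arrangement_of :: "nat list \<Rightarrow> (nat \<times> nat) list \<Rightarrow> mon list \<Rightarrow> nat \<Rightarrow> nat \<Rightarrow> nat" where
  "arrangement_of gs ys bs i j =
     (if i < length gs \<and> j < length ys then count (bs ! j) (gs ! i) else 0)"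

definition tuple_of_arrangement :: "nat list \<Rightarrow> (nat \<times> nat) list \<Rightarrow> (nat \<Rightarrow> nat \<Rightarrow> nat) \<Rightarrow> mon list" where
  "tuple_of_arrangement gs ys A =
     map (\<lambda>j. \<Sum>i<length gs. replicate_mset (A i j) (gs ! i)) [0..<length ys]"

lemma count_tuple_of_arrangement:
  assumes "distinct gs" "i < length gs" "j < length ys"
  shows "count (tuple_of_arrangement gs ys A ! j) (gs ! i) = A i j"
proof -
  have "count (tuple_of_arrangement gs ys A ! j) (gs ! i) = (\<Sum>i'<length gs. if i' = i then A i' j else 0)"
    using assms unfolding tuple_of_arrangement_def
    by (auto simp: count_sum nth_eq_iff_index_eq intro!: sum.cong)
  then show ?thesis using assms(2) by simp
qed

lemma count_tuple_of_arrangement_notin: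
  "g \<notin> set gs \<Longrightarrow> j < length ys \<Longrightarrow> count (tuple_of_arrangement gs ys A ! j) g = 0"
  unfolding tuple_of_arrangement_def by (auto simp: count_sum intro!: sum.neutral)

lemma count_tuple_mono: "count (tuple_mono ys bs) g = (\<Sum>j<length ys. snd (ys ! j) * count (bs ! j) g)"
  by (simp add: tuple_mono_def count_sum)

lemma set_mset_nth_subset_tuple_mono:
  assumes "j < length ys" "0 < snd (ys ! j)"
  shows "set_mset (bs ! j) \<subseteq> set_mset (tuple_mono ys bs)"
proof
  fix g assume "g \<in># bs ! j"
  moreover have "snd (ys ! j) * count (bs ! j) g \<le> count (tuple_mono ys bs) g"
    unfolding count_tuple_mono by (rule member_le_sum) (use assms in auto)
  ultimately show "g \<in># tuple_mono ys bs" using assms(2)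
    by (metis count_greater_zero_iff leD less_le_trans nat_0_less_mult_iff not_gr_zero)
qed

context monoid_degree
begin

context
  fixes x :: mon and gs :: "nat list" and xs ys :: "(nat \<times> nat) list"
  assumes distinct_gs: "distinct gs" and set_gs: "set gs = set_mset x"
    and xs_eq: "xs = map (\<lambda>i. (deg {#i#}, count x i)) gs"
begin

lemma tuple_of_arrangement_in_fibre:
  assumes "A \<in> arrangements_list xs ys"
  shows "tuple_of_arrangement gs ys A \<in> deg_tuples deg ys"
    and "tuple_mono ys (tuple_of_arrangement gs ys A) = x"
proof -
  let ?bs = "tuple_of_arrangement gs ys A"
  have rows: "(\<Sum>j<length ys. A i j * snd (ys ! j)) = count x (gs ! i)" if "i < length gs" for i
    using assms that unfolding arrangements_list_def xs_eq by auto
  have cols: "(\<Sum>i<length gs. A i j * deg {#gs ! i#}) = fst (ys ! j)" if "j < length ys" for j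
    using assms that unfolding arrangements_list_def xs_eq by auto
  show "?bs \<in> deg_tuples deg ys"
    unfolding deg_tuples_def
    using cols by (auto simp: tuple_of_arrangement_def deg_sum deg_replicate_mset)
  show "tuple_mono ys ?bs = x"
  proof (rule multiset_eqI)
    fix g
    show "count (tuple_mono ys ?bs) g = count x g"
    proof (cases "g \<in> set gs")
      case True
      then obtain i where i: "i < length gs" "g = gs ! i" by (auto simp: in_set_conv_nth)
      have "count (tuple_mono ys ?bs) g = (\<Sum>j<length ys. A i j * snd (ys ! j))"
        unfolding count_tuple_mono i(2)
        by (intro sum.cong) (auto simp: count_tuple_of_arrangement[OF distinct_gs i(1)])
      with rows i show ?thesis by simp
    next
      case False
      then show ?thesis
        using set_gs by (simp add: count_tuple_mono count_tuple_of_arrangement_notin count_eq_zero_iff)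
    qed
  qed
qed

context
  fixes bs :: "mon list"
  assumes bs: "bs \<in> deg_tuples deg ys" "tuple_mono ys bs = x"
    and pos: "\<forall>p\<in>set ys. 0 < snd p"
begin

lemma set_mset_nth_fibre_subset: "j < length ys \<Longrightarrow> set_mset (bs ! j) \<subseteq> set gs"
  using set_mset_nth_subset_tuple_mono[of j ys bs] pos bs(2) set_gs by auto

lemma arrangement_of_in_arrangements: "arrangement_of gs ys bs \<in> arrangements_list xs ys"
  unfolding arrangements_list_def
proof (intro CollectI conjI allI impI)
  fix i j
  show "length xs \<le> i \<or> length ys \<le> j \<Longrightarrow> arrangement_of gs ys bs i j = 0"
    by (auto simp: arrangement_of_def xs_eq)
next
  fix i assume i: "i < length xs"
  have "(\<Sum>j<length ys. arrangement_of gs ys bs i j * snd (ys ! j)) = count (tuple_mono ys bs) (gs ! i)"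
    unfolding count_tuple_mono using i by (intro sum.cong) (auto simp: arrangement_of_def xs_eq)
  then show "(\<Sum>j<length ys. arrangement_of gs ys bs i j * snd (ys ! j)) = snd (xs ! i)"
    using bs(2) i by (simp add: xs_eq)
next
  fix j assume j: "j < length ys"
  have "(\<Sum>i<length xs. arrangement_of gs ys bs i j * fst (xs ! i))
      = (\<Sum>i<length gs. count (bs ! j) (gs ! i) * deg {#gs ! i#})"
    using j by (intro sum.cong) (auto simp: arrangement_of_def xs_eq)
  also have "\<dots> = (\<Sum>g\<in>set gs. count (bs ! j) g * deg {#g#})"
    using distinct_gs by (simp add: sum.distinct_set_conv_list sum_list_sum_nth atLeast0LessThan)
  also have "\<dots> = deg (bs ! j)"
    by (rule deg_eq_sum_count[symmetric]) (use set_mset_nth_fibre_subset[OF j] in auto)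
  also have "\<dots> = fst (ys ! j)" using bs(1) j by (simp add: deg_tuples_def)
  finally show "(\<Sum>i<length xs. arrangement_of gs ys bs i j * fst (xs ! i)) = fst (ys ! j)" .
qed

lemma tuple_of_arrangement_of: "tuple_of_arrangement gs ys (arrangement_of gs ys bs) = bs"
proof (rule nth_equalityI)
  show "length (tuple_of_arrangement gs ys (arrangement_of gs ys bs)) = length bs"
    using bs(1) by (simp add: tuple_of_arrangement_def deg_tuples_def)
  fix j assume "j < length (tuple_of_arrangement gs ys (arrangement_of gs ys bs))"
  then have j: "j < length ys" by (simp add: tuple_of_arrangement_def)
  show "tuple_of_arrangement gs ys (arrangement_of gs ys bs) ! j = bs ! j"
  proof (rule multiset_eqI)
    fix g
    show "count (tuple_of_arrangement gs ys (arrangement_of gs ys bs) ! j) g = count (bs ! j) g"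
    proof (cases "g \<in> set gs")
      case True
      then obtain i where "i < length gs" "g = gs ! i" by (auto simp: in_set_conv_nth)
      then show ?thesis
        using j by (simp add: count_tuple_of_arrangement[OF distinct_gs] arrangement_of_def)
    next
      case False
      then show ?thesis
        using set_mset_nth_fibre_subset[OF j] j by (auto simp: count_tuple_of_arrangement_notin count_eq_zero_iff)
    qed
  qed
qed

end

lemma arrangement_of_tuple_of_arrangement:
  assumes "A \<in> arrangements_list xs ys"
  shows "arrangement_of gs ys (tuple_of_arrangement gs ys A) = A"
  using assms count_tuple_of_arrangement[OF distinct_gs]
  by (intro ext) (auto simp: arrangement_of_def arrangements_list_def xs_eq)

end

lemma card_fibre_tuple_mono:
  assumes pos: "\<forall>p\<in>set ys. 0 < snd p" and xs: "mset xs = type_of deg x"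
  shows "card {bs \<in> deg_tuples deg ys. tuple_mono ys bs = x} = card (arrangements_list xs ys)"
proof -
  obtain gs where gs: "distinct gs" "set gs = set_mset x" "map (\<lambda>i. (deg {#i#}, count x i)) gs = xs"
    using ex_distinct_list_map_eq[of "set_mset x" xs] xs unfolding type_of_def by auto
  note fibre = tuple_of_arrangement_in_fibre[OF gs(1,2) gs(3)[symmetric]]
    and arrangement = arrangement_of_in_arrangements[OF gs(1,2) gs(3)[symmetric]]
    and inverse1 = arrangement_of_tuple_of_arrangement[OF gs(1,2) gs(3)[symmetric]]
    and inverse2 = tuple_of_arrangement_of[OF gs(1,2) gs(3)[symmetric]]
  have "bij_betw (arrangement_of gs ys) {bs \<in> deg_tuples deg ys. tuple_mono ys bs = x} (arrangements_list xs ys)"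
    by (rule bij_betw_byWitness[where f' = "tuple_of_arrangement gs ys"])
      (use fibre arrangement inverse1 inverse2 pos in auto)
  then show ?thesis by (rule bij_betw_same_card)
qed

end

lemma sum_fibres_of_nat:
  fixes g :: "'b \<Rightarrow> 'r::comm_semiring_1"
  assumes "finite A" "finite D" "f ` A \<subseteq> D"
  shows "(\<Sum>a\<in>A. g (f a)) = (\<Sum>x\<in>D. of_nat (card {a \<in> A. f a = x}) * g x)"
proof -
  have "(\<Sum>a\<in>A. g (f a)) = (\<Sum>x\<in>D. \<Sum>a\<in>{a \<in> A. f a = x}. g (f a))"
    by (rule sum.group[symmetric]) (use assms in auto)
  also have "\<dots> = (\<Sum>x\<in>D. of_nat (card {a \<in> A. f a = x}) * g x)"
    by (intro sum.cong refl) simp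
  finally show ?thesis .
qed

context monoid_degree
begin

lemma sum_over_deg_eq_sum_over_types:
  "(\<Sum>x\<in>{x. deg x = d}. h (type_of deg x) * mono x :: _ \<Rightarrow>\<^sub>0 'r::comm_ring_1)
     = (\<Sum>l\<in>types_of_deg d. h l * X deg l)"
proof -
  have "(\<Sum>x\<in>{x. deg x = d}. h (type_of deg x) * mono x :: _ \<Rightarrow>\<^sub>0 'r)
      = (\<Sum>l\<in>types_of_deg d. \<Sum>x\<in>{x \<in> {x. deg x = d}. type_of deg x = l}. h (type_of deg x) * mono x)"
    by (rule sum.group[symmetric, OF finite_deg_eq finite_types_of_deg])
      (auto simp: is_type_type_of tdeg_type_of types_of_deg_def)
  also have "\<dots> = (\<Sum>l\<in>types_of_deg d. h l * X deg l)"
  proof (intro sum.cong refl)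
    fix l assume "l \<in> types_of_deg d"
    then have "{x \<in> {x. deg x = d}. type_of deg x = l} = {x. type_of deg x = l}"
      by (auto simp: types_of_deg_def tdeg_type_of[symmetric])
    then show "(\<Sum>x\<in>{x \<in> {x. deg x = d}. type_of deg x = l}. h (type_of deg x) * mono x) = h l * X deg l"
      by (simp add: X_def sum_distrib_left)
  qed
  finally show ?thesis .
qed

theorem S_eq_sum_arr_X:
  assumes "is_type \<tau>"
  shows "(S deg \<tau> :: _ \<Rightarrow>\<^sub>0 'r::comm_ring_1) = (\<Sum>l\<in>types_of_deg (tdeg \<tau>). of_nat (arr l \<tau>) * X deg l)"
proof -
  let ?ys = "type_list \<tau>"
  have "set ?ys = set_mset \<tau>" by (metis mset_type_list set_mset_mset)
  then have pos: "\<forall>p\<in>set ?ys. 0 < snd p" using assms by (auto simp: is_type_def)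
  have "(S deg \<tau> :: _ \<Rightarrow>\<^sub>0 'r) = (\<Sum>bs\<in>deg_tuples deg ?ys. mono (tuple_mono ?ys bs))"
    by (rule S_eq_sum_deg_tuples)
  also have "\<dots> = (\<Sum>x\<in>{x. deg x = tdeg \<tau>}.
      of_nat (card {bs \<in> deg_tuples deg ?ys. tuple_mono ?ys bs = x}) * mono x)"
    by (rule sum_fibres_of_nat) (auto simp: finite_deg_tuples finite_deg_eq deg_tuple_mono mset_type_list)
  also have "\<dots> = (\<Sum>x\<in>{x. deg x = tdeg \<tau>}. of_nat (arr (type_of deg x) \<tau>) * mono x)"
    by (simp add: card_fibre_tuple_mono[OF pos mset_type_list] arr_type_list)
  also have "\<dots> = (\<Sum>l\<in>types_of_deg (tdeg \<tau>). of_nat (arr l \<tau>) * X deg l)"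
    by (rule sum_over_deg_eq_sum_over_types)
  finally show ?thesis .
qed

end

lemma mset_eq_if_bij_betw_nth:
  assumes "bij_betw f {..<length ys} {..<length xs}" "\<And>j. j < length ys \<Longrightarrow> ys ! j = xs ! f j"
  shows "mset ys = mset xs"
proof -
  have mset_nth: "mset zs = image_mset ((!) zs) (mset_set {..<length zs})" for zs :: "'a list"
    by (metis map_nth mset_map mset_set_upto_eq_mset_upto)
  have "mset ys = image_mset ((!) xs \<circ> f) (mset_set {..<length ys})"
    unfolding mset_nth[of ys] using assms(2) by (intro image_mset_cong) auto
  also have "\<dots> = image_mset ((!) xs) (mset_set (f ` {..<length ys}))"
    using assms(1) by (simp add: image_mset.compositionality[symmetric] image_mset_mset_set bij_betw_def)
  also have "\<dots> = mset xs" using assms(1) mset_nth[of xs] by (simp add: bij_betw_def)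
  finally show ?thesis .
qed

lemma is_type_mset_nth:
  assumes "is_type (mset zs)" "i < length zs"
  shows "0 < fst (zs ! i) \<and> 0 < snd (zs ! i)"
proof -
  have "zs ! i \<in># mset zs" using assms(2) by simp
  then show ?thesis using assms(1) unfolding is_type_def by (simp add: case_prod_beta)
qed

context
  fixes A :: "nat \<Rightarrow> nat \<Rightarrow> nat" and xs ys :: "(nat \<times> nat) list"
  assumes A: "A \<in> arrangements_list xs ys"
    and types: "is_type (mset xs)" "is_type (mset ys)"
begin

lemma arrangement_zero: "length xs \<le> i \<or> length ys \<le> j \<Longrightarrow> A i j = 0"
  and arrangement_row: "i < length xs \<Longrightarrow> (\<Sum>j<length ys. A i j * snd (ys ! j)) = snd (xs ! i)"
  and arrangement_col: "j < length ys \<Longrightarrow> (\<Sum>i<length xs. A i j * fst (xs ! i)) = fst (ys ! j)"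
  using A unfolding arrangements_list_def by auto

lemma arrangement_col_sum_pos: "j < length ys \<Longrightarrow> 0 < (\<Sum>i<length xs. A i j)"
proof (rule ccontr)
  assume "j < length ys" "\<not> 0 < (\<Sum>i<length xs. A i j)"
  then have "fst (ys ! j) = 0" by (simp flip: arrangement_col)
  with is_type_mset_nth[OF types(2) \<open>j < length ys\<close>] show False by simp
qed

lemma sum_snd_eq_arrangement:
  "sum_list (map snd xs) = (\<Sum>j<length ys. snd (ys ! j) * (\<Sum>i<length xs. A i j))"
proof -
  have "sum_list (map snd xs) = (\<Sum>i<length xs. \<Sum>j<length ys. A i j * snd (ys ! j))"
    by (simp add: sum_list_sum_nth atLeast0LessThan arrangement_row)
  also have "\<dots> = (\<Sum>j<length ys. snd (ys ! j) * (\<Sum>i<length xs. A i j))"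
    by (subst sum.swap) (simp add: sum_distrib_left mult.commute)
  finally show ?thesis .
qed

lemma sum_snd_le_of_arrangement: "sum_list (map snd ys) \<le> sum_list (map snd xs)"
  unfolding sum_snd_eq_arrangement
  by (simp add: sum_list_sum_nth atLeast0LessThan) (intro sum_mono, simp add: arrangement_col_sum_pos Suc_le_eq)

(* Equal total multiplicity forces every column of the arrangement to be a unit vector. *)

context
  assumes sum_snd_eq: "sum_list (map snd ys) = sum_list (map snd xs)"
begin

lemma arrangement_col_sum_eq_1: "j < length ys \<Longrightarrow> (\<Sum>i<length xs. A i j) = 1"
proof -
  assume j: "j < length ys"
  have "(\<Sum>j<length ys. snd (ys ! j)) = (\<Sum>j<length ys. snd (ys ! j) * (\<Sum>i<length xs. A i j))"
    using sum_snd_eq sum_snd_eq_arrangement by (simp add: sum_list_sum_nth atLeast0LessThan)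
  then have "snd (ys ! j) = snd (ys ! j) * (\<Sum>i<length xs. A i j)"
    by (rule sum_mono_inv) (use j arrangement_col_sum_pos in \<open>auto simp: Suc_le_eq\<close>)
  then show ?thesis using is_type_mset_nth[OF types(2) j] by simp
qed

lemma arrangement_unit_col:
  assumes "j < length ys"
  obtains i where "i < length xs" "A i j = 1" "\<And>i'. i' \<noteq> i \<Longrightarrow> A i' j = 0"
proof -
  obtain i where "i \<in> {..<length xs}" "A i j = 1" "\<forall>i'\<in>{..<length xs}. i \<noteq> i' \<longrightarrow> A i' j = 0"
    using arrangement_col_sum_eq_1[OF assms] unfolding sum_eq_1_iff[OF finite_lessThan] by blast
  then show thesis using that arrangement_zero by (metis lessThan_iff not_le)
qed

lemma length_le_of_arrangement: "length xs \<le> length ys"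
  and mset_eq_of_arrangement: "length xs = length ys \<Longrightarrow> mset xs = mset ys"
proof -
  have "\<exists>i. i < length xs \<and> A i j = 1 \<and> (\<forall>i'. i' \<noteq> i \<longrightarrow> A i' j = 0)" if "j < length ys" for j
    using arrangement_unit_col[OF that] by blast
  then obtain f where f: "\<And>j. j < length ys
      \<Longrightarrow> f j < length xs \<and> A (f j) j = 1 \<and> (\<forall>i. i \<noteq> f j \<longrightarrow> A i j = 0)"
    by metis
  have surj: "f ` {..<length ys} = {..<length xs}"
  proof (intro equalityI subsetI)
    fix i assume "i \<in> {..<length xs}"
    then have "(\<Sum>j<length ys. A i j * snd (ys ! j)) \<noteq> 0"
      using arrangement_row[of i] is_type_mset_nth[OF types(1), of i] by simp
    then obtain j where "j < length ys" "A i j \<noteq> 0" using sum.not_neutral_contains_not_neutral by force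
    with f[of j] show "i \<in> f ` {..<length ys}" by auto
  qed (use f in auto)
  have "card (f ` {..<length ys}) \<le> card {..<length ys}" by (rule card_image_le) simp
  then show "length xs \<le> length ys" by (simp add: surj)
  assume len: "length xs = length ys"
  then have bij: "bij_betw f {..<length ys} {..<length xs}"
    using surj by (simp add: bij_betw_def eq_card_imp_inj_on)
  have "ys ! j = xs ! f j" if j: "j < length ys" for j
  proof -
    have "(\<Sum>i<length xs. A i j * fst (xs ! i)) = (\<Sum>i<length xs. if i = f j then fst (xs ! i) else 0)"
      using f[OF j] by (intro sum.cong) auto
    then have "fst (ys ! j) = fst (xs ! f j)" using arrangement_col[OF j] f[OF j] by simp
    moreover have "A (f j) j' = 0" if "j' < length ys" "j' \<noteq> j" for j'
      using f[OF that(1)] inj_onD[OF bij_betw_imp_inj_on[OF bij], of j j'] that j by auto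
    then have "(\<Sum>j'<length ys. A (f j) j' * snd (ys ! j')) = (\<Sum>j'<length ys. if j' = j then snd (ys ! j') else 0)"
      using f[OF j] by (intro sum.cong) auto
    then have "snd (ys ! j) = snd (xs ! f j)" using arrangement_row[of "f j"] f[OF j] j by simp
    ultimately show ?thesis by (simp add: prod_eq_iff)
  qed
  then show "mset xs = mset ys" using mset_eq_if_bij_betw_nth[OF bij] by simp
qed

end

end

lemma finite_arrangements_list:
  assumes "is_type (mset ys)"
  shows "finite (arrangements_list xs ys)"
proof -
  let ?r = "length xs" and ?s = "length ys" and ?M = "sum_list (map snd xs)"
  let ?extend = "\<lambda>f :: nat \<times> nat \<Rightarrow> nat. \<lambda>i j. if i < ?r \<and> j < ?s then f (i, j) else 0"
  have "arrangements_list xs ys \<subseteq> ?extend ` (({..<?r} \<times> {..<?s}) \<rightarrow>\<^sub>E {..?M})"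
  proof
    fix A assume A: "A \<in> arrangements_list xs ys"
    have "A i j \<le> ?M" if "i < ?r" "j < ?s" for i j
    proof -
      have "A i j \<le> A i j * snd (ys ! j)" using is_type_mset_nth[OF assms that(2)] by simp
      also have "\<dots> \<le> (\<Sum>j<?s. A i j * snd (ys ! j))" by (rule member_le_sum) (use that in auto)
      also have "\<dots> = snd (xs ! i)" using A that by (simp add: arrangements_list_def)
      also have "\<dots> \<le> ?M" using elem_le_sum_list[of i "map snd xs"] that by simp
      finally show ?thesis .
    qed
    then have "restrict (\<lambda>(i, j). A i j) ({..<?r} \<times> {..<?s}) \<in> ({..<?r} \<times> {..<?s}) \<rightarrow>\<^sub>E {..?M}"
      by auto
    moreover have "A = ?extend (restrict (\<lambda>(i, j). A i j) ({..<?r} \<times> {..<?s}))"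
      using A by (intro ext) (auto simp: arrangements_list_def)
    ultimately show "A \<in> ?extend ` (({..<?r} \<times> {..<?s}) \<rightarrow>\<^sub>E {..?M})" by blast
  qed
  then show ?thesis by (rule finite_subset) (intro finite_imageI finite_PiE, auto)
qed

lemma arrangements_list_ne_empty_if_mset_eq:
  assumes "mset xs = mset ys"
  shows "arrangements_list xs ys \<noteq> {}"
proof -
  obtain f where f: "bij_betw f {..<length xs} {..<length ys}" "\<And>i. i < length xs \<Longrightarrow> xs ! i = ys ! f i"
    using permutation_Ex_bij[OF assms] by auto
  define P where "P i j = (if i < length xs \<and> j = f i then 1 else (0::nat))" for i j
  have row: "(\<Sum>j<length ys. P i j * h j) = h (f i)" if "i < length xs" for i and h :: "nat \<Rightarrow> nat"
  proof -
    have "(\<Sum>j<length ys. P i j * h j) = (\<Sum>j<length ys. if j = f i then h j else 0)"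
      using that by (intro sum.cong) (auto simp: P_def)
    then show ?thesis using that bij_betwE[OF f(1)] by simp
  qed
  define g where "g = inv_into {..<length xs} f"
  have g: "g j < length xs" "f (g j) = j" if "j < length ys" for j
    using that f(1) bij_betwE[OF bij_betw_inv_into[OF f(1)]] by (auto simp: g_def bij_betw_inv_into_right)
  have col: "(\<Sum>i<length xs. P i j * h i) = h (g j)" if "j < length ys" for j and h :: "nat \<Rightarrow> nat"
  proof -
    have "(\<Sum>i<length xs. P i j * h i) = (\<Sum>i<length xs. if i = g j then h i else 0)"
      using that g f(1) by (intro sum.cong) (auto simp: P_def g_def bij_betw_inv_into_left)
    then show ?thesis using g[OF that] by simp
  qed
  have "P \<in> arrangements_list xs ys"
    unfolding arrangements_list_def
  proof (intro CollectI conjI allI impI)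
    fix i j assume "length xs \<le> i \<or> length ys \<le> j"
    moreover have "f i < length ys" if "i < length xs" using bij_betwE[OF f(1)] that by auto
    ultimately show "P i j = 0" by (auto simp: P_def)
  next
    fix i assume "i < length xs" then show "(\<Sum>j<length ys. P i j * snd (ys ! j)) = snd (xs ! i)"
      by (simp add: row f(2))
  next
    fix j assume "j < length ys"
    then show "(\<Sum>i<length xs. P i j * fst (xs ! i)) = fst (ys ! j)"
      by (simp add: col g f(2))
  qed
  then show ?thesis by blast
qed

lemma arr_self_ne_0: "is_type l \<Longrightarrow> arr l l \<noteq> 0"
  using finite_arrangements_list[of "type_list l"] arrangements_list_ne_empty_if_mset_eq[OF refl]
  by (simp add: arr_type_list mset_type_list)

(* Since size l <= d for types l of degree d, the rank orders them lexicographically: first by total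
  multiplicity, then by decreasing number of parts. *)

definition type_rank :: "nat \<Rightarrow> mtype \<Rightarrow> nat" where
  "type_rank d l = (d + 1) * sum_mset (image_mset snd l) + (d - size l)"

lemma arr_ne_0_imp_type_rank_less:
  assumes l: "l \<in> types_of_deg d" and u: "u \<in> types_of_deg d" and "arr l u \<noteq> 0" "l \<noteq> u"
  shows "type_rank d u < type_rank d l"
proof -
  let ?xs = "type_list l" and ?ys = "type_list u"
  have types: "is_type (mset ?xs)" "is_type (mset ?ys)"
    using l u by (auto simp: types_of_deg_def mset_type_list)
  have "size u \<le> d" using u size_le_tdeg[of u] by (simp add: types_of_deg_def)
  from assms(3) obtain A where A: "A \<in> arrangements_list ?xs ?ys"
    unfolding arr_type_list by (metis card.empty ex_in_conv)
  have weight: "sum_mset (image_mset snd t) = sum_list (map snd (type_list t))" for t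
    by (metis mset_map mset_type_list sum_mset_sum_list)
  have len: "length ?xs = size l" "length ?ys = size u" by (metis mset_type_list size_mset)+
  show ?thesis
  proof (cases "sum_list (map snd ?ys) = sum_list (map snd ?xs)")
    case True
    have "size l \<le> size u" using length_le_of_arrangement[OF A types True] by (simp add: len)
    moreover have "size l \<noteq> size u"
      using mset_eq_of_arrangement[OF A types True] assms(4) by (auto simp: len mset_type_list)
    ultimately have "size l < size u" by simp
    with True \<open>size u \<le> d\<close> show ?thesis by (simp add: type_rank_def weight)
  next
    case False
    with sum_snd_le_of_arrangement[OF A types]
    have "sum_mset (image_mset snd u) + 1 \<le> sum_mset (image_mset snd l)" by (simp add: weight)
    then have "(d + 1) * (sum_mset (image_mset snd u) + 1) \<le> (d + 1) * sum_mset (image_mset snd l)"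
      by (rule mult_le_mono2)
    then show ?thesis by (simp add: type_rank_def algebra_simps)
  qed
qed

lemma det_ne_0_if_triangular_wrt_rank:
  fixes a :: "'a \<Rightarrow> 'a \<Rightarrow> 'f::field" and rank :: "'a \<Rightarrow> nat"
  assumes "distinct ts" "sorted (map rank ts)"
    and triangular: "\<And>l u. l \<in> set ts \<Longrightarrow> u \<in> set ts \<Longrightarrow> a l u \<noteq> 0 \<Longrightarrow> l \<noteq> u
      \<Longrightarrow> rank u < rank l"
    and diagonal: "\<And>l. l \<in> set ts \<Longrightarrow> a l l \<noteq> 0"
  shows "det (mat (length ts) (length ts) (\<lambda>(i, j). a (ts ! i) (ts ! j))) \<noteq> 0"
proof -
  let ?n = "length ts"
  let ?M = "mat ?n ?n (\<lambda>(i, j). a (ts ! i) (ts ! j))"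
  have "?M $$ (i, j) = 0" if "i < j" "j < ?n" for i j
  proof (rule ccontr)
    assume "?M $$ (i, j) \<noteq> 0"
    then have "a (ts ! i) (ts ! j) \<noteq> 0" using that by simp
    moreover have "ts ! i \<noteq> ts ! j" using assms(1) that by (simp add: nth_eq_iff_index_eq)
    ultimately have "rank (ts ! j) < rank (ts ! i)" using that by (intro triangular) auto
    moreover have "rank (ts ! i) \<le> rank (ts ! j)"
      using sorted_nth_mono[OF assms(2), of i j] that by simp
    ultimately show False by simp
  qed
  then have "det ?M = (\<Prod>i = 0..<?n. a (ts ! i) (ts ! i))"
    by (subst det_lower_triangular[of ?n]) (auto simp: prod_list_diag_prod)
  also have "\<dots> \<noteq> 0" using diagonal by simp
  finally show ?thesis .
qed

lemma ex_inverse_on_set_if_det_ne_0: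
  fixes a :: "'a \<Rightarrow> 'a \<Rightarrow> 'f::field"
  assumes "distinct ts" "det (mat (length ts) (length ts) (\<lambda>(i, j). a (ts ! i) (ts ! j))) \<noteq> 0"
  shows "\<exists>g. \<forall>l\<in>set ts. \<forall>t\<in>set ts.
           (\<Sum>u\<in>set ts. a l u * g u t) = (if l = t then 1 else 0)
         \<and> (\<Sum>u\<in>set ts. g l u * a u t) = (if l = t then 1 else 0)"
proof -
  let ?n = "length ts"
  define M where "M = mat ?n ?n (\<lambda>(i, j). a (ts ! i) (ts ! j))"
  have M: "M \<in> carrier_mat ?n ?n" by (simp add: M_def)
  obtain B where B: "B \<in> carrier_mat ?n ?n" "B * M = 1\<^sub>m ?n" "M * B = 1\<^sub>m ?n"
    using det_non_zero_imp_unit[OF M assms(2)[folded M_def], of "()"]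
    unfolding Units_def ring_mat_simps by blast
  define idx where "idx = the_inv_into {..<?n} ((!) ts)"
  have inj: "inj_on ((!) ts) {..<?n}" using assms(1) by (simp add: inj_on_def nth_eq_iff_index_eq)
  have idx: "idx (ts ! i) = i" if "i < ?n" for i
    using the_inv_into_f_f[OF inj] that by (simp add: idx_def)
  have sum_set: "(\<Sum>u\<in>set ts. h u) = (\<Sum>k<?n. h (ts ! k))" for h :: "'a \<Rightarrow> 'f"
    using assms(1) by (simp add: sum.distinct_set_conv_list sum_list_sum_nth atLeast0LessThan)
  have entry: "(X * Y) $$ (i, j) = (\<Sum>k<?n. X $$ (i, k) * Y $$ (k, j))"
    if "X \<in> carrier_mat ?n ?n" "Y \<in> carrier_mat ?n ?n" "i < ?n" "j < ?n" for X Y :: "'f mat" and i j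
    using that by (simp add: scalar_prod_def atLeast0LessThan)
  define g where "g l t = B $$ (idx l, idx t)" for l t
  have inverse: "(\<Sum>u\<in>set ts. a (ts ! i) u * g u (ts ! j)) = (if ts ! i = ts ! j then 1 else 0)
      \<and> (\<Sum>u\<in>set ts. g (ts ! i) u * a u (ts ! j)) = (if ts ! i = ts ! j then 1 else 0)"
    if "i < ?n" "j < ?n" for i j
  proof -
    have "(if ts ! i = ts ! j then 1 else 0) = (1\<^sub>m ?n :: 'f mat) $$ (i, j)"
      using that assms(1) by (simp add: nth_eq_iff_index_eq)
    moreover have "(\<Sum>u\<in>set ts. a (ts ! i) u * g u (ts ! j)) = (M * B) $$ (i, j)"
      unfolding entry[OF M B(1) that] using that by (simp add: sum_set M_def g_def idx)
    moreover have "(\<Sum>u\<in>set ts. g (ts ! i) u * a u (ts ! j)) = (B * M) $$ (i, j)"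
      unfolding entry[OF B(1) M that] using that by (simp add: sum_set M_def g_def idx)
    ultimately show ?thesis using B by simp
  qed
  show ?thesis
  proof (intro exI ballI)
    fix l t assume "l \<in> set ts" "t \<in> set ts"
    then obtain i j where "i < ?n" "l = ts ! i" "j < ?n" "t = ts ! j" by (auto simp: in_set_conv_nth)
    with inverse show "(\<Sum>u\<in>set ts. a l u * g u t) = (if l = t then 1 else 0)
      \<and> (\<Sum>u\<in>set ts. g l u * a u t) = (if l = t then 1 else 0)" by blast
  qed
qed

lemma ex_is_arr_inverse: "\<exists>g. is_arr_inverse d g"
proof -
  obtain ts0 where ts0: "distinct ts0" "set ts0 = types_of_deg d"
    using finite_distinct_list[OF finite_types_of_deg] by blast
  define ts where "ts = sort_key (type_rank d) ts0"
  have ts: "distinct ts" "set ts = types_of_deg d" "sorted (map (type_rank d) ts)"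
    using ts0 by (simp_all add: ts_def)
  have "det (mat (length ts) (length ts) (\<lambda>(i, j). of_nat (arr (ts ! i) (ts ! j)) :: rat)) \<noteq> 0"
    using ts arr_ne_0_imp_type_rank_less arr_self_ne_0
    by (intro det_ne_0_if_triangular_wrt_rank) (auto simp: types_of_deg_def)
  from ex_inverse_on_set_if_det_ne_0[OF ts(1) this]
  obtain g :: "mtype \<Rightarrow> mtype \<Rightarrow> rat" where g: "\<forall>l\<in>set ts. \<forall>t\<in>set ts.
      (\<Sum>u\<in>set ts. of_nat (arr l u) * g u t) = (if l = t then 1 else 0)
    \<and> (\<Sum>u\<in>set ts. g l u * of_nat (arr u t)) = (if l = t then 1 else 0)"
    by blast
  define g' where "g' l t = (if l \<in> types_of_deg d \<and> t \<in> types_of_deg d then g l t else 0)" for l t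
  have "is_arr_inverse d g'"
    unfolding is_arr_inverse_def
  proof (intro conjI ballI allI impI)
    fix l t assume lt: "l \<in> types_of_deg d" "t \<in> types_of_deg d"
    have "(\<Sum>u\<in>types_of_deg d. of_nat (arr l u) * g' u t) = (\<Sum>u\<in>types_of_deg d. of_nat (arr l u) * g u t)"
      "(\<Sum>u\<in>types_of_deg d. g' l u * of_nat (arr u t)) = (\<Sum>u\<in>types_of_deg d. g l u * of_nat (arr u t))"
      using lt by (auto simp: g'_def intro!: sum.cong)
    with g lt show "(\<Sum>u\<in>types_of_deg d. of_nat (arr l u) * g' u t) = (if l = t then 1 else 0)"
      "(\<Sum>u\<in>types_of_deg d. g' l u * of_nat (arr u t)) = (if l = t then 1 else 0)"
      unfolding ts(2) by simp_all
  qed (auto simp: g'_def)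
  then show ?thesis by blast
qed

lemma is_arr_inverse_unique:
  assumes g: "is_arr_inverse d g" and h: "is_arr_inverse d h"
  shows "g = h"
proof (intro ext)
  fix l t
  let ?T = "types_of_deg d"
  show "g l t = h l t"
  proof (cases "l \<in> ?T \<and> t \<in> ?T")
    case False then show ?thesis using g h unfolding is_arr_inverse_def by auto
  next
    case True
    have fin: "finite ?T" by (rule finite_types_of_deg)
    have hinv: "(\<Sum>v\<in>?T. of_nat (arr u v) * h v t) = (if u = t then 1 else 0)" if "u \<in> ?T" for u
      using h True that unfolding is_arr_inverse_def by blast
    have ginv: "(\<Sum>u\<in>?T. g l u * of_nat (arr u v)) = (if l = v then 1 else 0)" if "v \<in> ?T" for v
      using g True that unfolding is_arr_inverse_def by blast
    have "g l t = (\<Sum>u\<in>?T. g l u * (if u = t then 1 else 0))"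
      using True fin by (simp add: if_distrib[of "(*) _"] cong: if_cong)
    also have "\<dots> = (\<Sum>u\<in>?T. g l u * (\<Sum>v\<in>?T. of_nat (arr u v) * h v t))"
      using hinv by simp
    also have "\<dots> = (\<Sum>v\<in>?T. (\<Sum>u\<in>?T. g l u * of_nat (arr u v)) * h v t)"
      by (simp add: sum_distrib_left sum_distrib_right mult.assoc) (rule sum.swap)
    also have "\<dots> = (\<Sum>v\<in>?T. (if l = v then 1 else 0) * h v t)"
      using ginv by simp
    also have "\<dots> = h l t"
      using True fin by (simp add: if_distrib[of "\<lambda>x. x * _"] cong: if_cong)
    finally show ?thesis .
  qed
qed

lemma arr_arr_inv:
  assumes "l \<in> types_of_deg (tdeg \<tau>)" "\<tau> \<in> types_of_deg (tdeg \<tau>)"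
  shows "(\<Sum>u\<in>types_of_deg (tdeg \<tau>). of_nat (arr l u) * arr_inv u \<tau>) = (if l = \<tau> then 1 else 0)"
proof -
  obtain g where g: "is_arr_inverse (tdeg \<tau>) g" using ex_is_arr_inverse by blast
  then have "(THE g. is_arr_inverse (tdeg \<tau>) g) = g"
    using is_arr_inverse_unique by (intro the_equality) auto
  then have "arr_inv u \<tau> = g u \<tau>" for u by (simp add: arr_inv_def)
  then show ?thesis using g assms unfolding is_arr_inverse_def by simp
qed

definition coeff_sum :: "('a \<Rightarrow>\<^sub>0 'b::comm_monoid_add) \<Rightarrow> 'b" where
  "coeff_sum f = (\<Sum>x\<in>Poly_Mapping.keys f. Poly_Mapping.lookup f x)"

lemma coeff_sum_eq_sum_superset:
  "finite A \<Longrightarrow> Poly_Mapping.keys f \<subseteq> A \<Longrightarrow> coeff_sum f = (\<Sum>x\<in>A. Poly_Mapping.lookup f x)"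
  unfolding coeff_sum_def by (rule sum.mono_neutral_left) (auto simp: in_keys_iff)

lemma coeff_sum_add: "coeff_sum (f + g) = coeff_sum f + coeff_sum g"
proof -
  let ?A = "Poly_Mapping.keys f \<union> Poly_Mapping.keys g"
  have "coeff_sum (f + g) = (\<Sum>x\<in>?A. Poly_Mapping.lookup f x + Poly_Mapping.lookup g x)"
    by (subst coeff_sum_eq_sum_superset[of ?A]) (auto simp: lookup_add in_keys_iff)
  also have "\<dots> = coeff_sum f + coeff_sum g"
    by (simp add: sum.distrib coeff_sum_eq_sum_superset[of ?A])
  finally show ?thesis .
qed

lemma coeff_sum_sum: "coeff_sum (sum f A) = (\<Sum>a\<in>A. coeff_sum (f a))"
  by (induct A rule: infinite_finite_induct) (simp_all add: coeff_sum_add, simp_all add: coeff_sum_def)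

lemma coeff_sum_single: "coeff_sum (Poly_Mapping.single x c) = c"
  by (simp add: coeff_sum_def)

lemma coeff_sum_single_0_mult:
  "coeff_sum (Poly_Mapping.single 0 s * f) = s * coeff_sum (f :: 'a::cancel_comm_monoid_add \<Rightarrow>\<^sub>0 'b::semiring_1)"
proof -
  have lookup: "Poly_Mapping.lookup (Poly_Mapping.single 0 s * f) x = s * Poly_Mapping.lookup f x" for x
    by (simp add: mult_map_scale_conv_mult[symmetric] map.rep_eq when_def)
  then have "coeff_sum (Poly_Mapping.single 0 s * f) = (\<Sum>x\<in>Poly_Mapping.keys f. s * Poly_Mapping.lookup f x)"
    by (subst coeff_sum_eq_sum_superset[of "Poly_Mapping.keys f"]) (auto simp: in_keys_iff)
  then show ?thesis by (simp add: coeff_sum_def sum_distrib_left)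
qed

lemma single_0_mult_of_nat:
  "Poly_Mapping.single 0 c * (of_nat n * f) = Poly_Mapping.single 0 (of_nat n * c) * (f :: 'a::comm_monoid_add \<Rightarrow>\<^sub>0 'b::comm_semiring_1)"
proof -
  have "(of_nat n :: 'a \<Rightarrow>\<^sub>0 'b) = Poly_Mapping.single 0 (of_nat n)" by simp
  then have "Poly_Mapping.single 0 c * (of_nat n * f)
      = (Poly_Mapping.single 0 c * Poly_Mapping.single 0 (of_nat n)) * f"
    by (simp only: mult.assoc)
  also have "Poly_Mapping.single 0 c * Poly_Mapping.single 0 (of_nat n) = Poly_Mapping.single 0 (of_nat n * c)"
    by (subst mult_single) (simp add: mult.commute)
  finally show ?thesis .
qed

lemma sum_single: "(\<Sum>i\<in>I. Poly_Mapping.single k (c i)) = Poly_Mapping.single k (sum c I)"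
  by (induct I rule: infinite_finite_induct) (simp_all add: single_add)

context monoid_degree
begin

theorem X_eq_sum_arr_inv_S:
  assumes "is_type \<tau>"
  shows "(X deg \<tau> :: _ \<Rightarrow>\<^sub>0 rat)
           = (\<Sum>l\<in>types_of_deg (tdeg \<tau>). Poly_Mapping.single {#} (arr_inv l \<tau>) * S deg l)"
proof -
  let ?T = "types_of_deg (tdeg \<tau>)"
  have \<tau>: "\<tau> \<in> ?T" using assms by (simp add: types_of_deg_def)
  have "(\<Sum>l\<in>?T. Poly_Mapping.single {#} (arr_inv l \<tau>) * S deg l)
      = (\<Sum>l\<in>?T. Poly_Mapping.single 0 (arr_inv l \<tau>) * (\<Sum>u\<in>?T. of_nat (arr u l) * X deg u))"
    by (intro sum.cong refl) (auto simp: types_of_deg_def S_eq_sum_arr_X)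
  also have "\<dots> = (\<Sum>l\<in>?T. \<Sum>u\<in>?T. Poly_Mapping.single 0 (of_nat (arr u l) * arr_inv l \<tau>) * X deg u)"
    by (simp add: sum_distrib_left single_0_mult_of_nat)
  also have "\<dots> = (\<Sum>u\<in>?T. Poly_Mapping.single 0 (\<Sum>l\<in>?T. of_nat (arr u l) * arr_inv l \<tau>) * X deg u)"
    by (subst sum.swap) (simp only: sum_distrib_right[symmetric] sum_single)
  also have "\<dots> = (\<Sum>u\<in>?T. if u = \<tau> then X deg u else 0)"
    by (intro sum.cong refl) (simp add: arr_arr_inv \<tau>)
  also have "\<dots> = X deg \<tau>" using \<tau> finite_types_of_deg by simp
  finally show ?thesis by simp
qed

lemma coeff_sum_X: "coeff_sum (X deg \<tau> :: _ \<Rightarrow>\<^sub>0 rat) = of_nat (card {b. type_of deg b = \<tau>})"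
proof -
  have "finite {b. type_of deg b = \<tau>}"
    by (rule finite_subset[OF _ finite_deg_eq[of "tdeg \<tau>"]]) (auto simp: tdeg_type_of)
  then show ?thesis by (simp add: X_def coeff_sum_sum mono_def coeff_sum_single)
qed

lemma coeff_sum_S: "coeff_sum (S deg l :: _ \<Rightarrow>\<^sub>0 rat) = (\<Prod>(k, m)\<in>#l. of_nat (card {b. deg b = k}))"
proof -
  have "coeff_sum (S deg l :: _ \<Rightarrow>\<^sub>0 rat) = of_nat (card (deg_tuples deg (type_list l)))"
    by (simp add: S_eq_sum_deg_tuples coeff_sum_sum mono_def coeff_sum_single)
  also have "\<dots> = (\<Prod>(k, m)\<leftarrow>type_list l. of_nat (card {b. deg b = k}))"
    by (rule card_deg_tuples)
  also have "\<dots> = (\<Prod>(k, m)\<in>#l. of_nat (card {b. deg b = k}))"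
    unfolding prod_mset_prod_list[symmetric] mset_map mset_type_list ..
  finally show ?thesis .
qed

theorem card_type_eq_sum_arr_inv:
  assumes "is_type \<tau>"
  shows "(of_nat (card {b. type_of deg b = \<tau>}) :: rat)
           = (\<Sum>\<sigma>\<in>types_of_deg (tdeg \<tau>). arr_inv \<sigma> \<tau> * (\<Prod>(k, m)\<in>#\<sigma>. of_nat (card {b. deg b = k})))"
  unfolding coeff_sum_X[symmetric] X_eq_sum_arr_inv_S[OF assms]
  by (simp add: coeff_sum_sum coeff_sum_single_0_mult coeff_sum_S)

end

theorem theorem5:
  fixes deg :: "nat multiset \<Rightarrow> nat" and \<tau> :: "(nat \<times> nat) multiset"
  assumes hom0: "deg {#} = 0"
    and hom: "\<And>x y. deg (x + y) = deg x + deg y"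
    and deg0: "{b. deg b = 0} = { {#} }"
    and fin: "\<And>d. 0 < d \<Longrightarrow> finite {b. deg b = d}"
    and is_ty: "is_type \<tau>"
  shows "(S deg \<tau> :: nat multiset \<Rightarrow>\<^sub>0 int)
           = (\<Sum>lam\<in>types_of_deg (tdeg \<tau>). of_nat (arr lam \<tau>) * X deg lam)
       \<and> (X deg \<tau> :: nat multiset \<Rightarrow>\<^sub>0 rat)
           = (\<Sum>lam\<in>types_of_deg (tdeg \<tau>). Poly_Mapping.single {#} (arr_inv lam \<tau>) * S deg lam)
       \<and> (of_nat (card {b. type_of deg b = \<tau>}) :: rat)
           = (\<Sum>\<sigma>\<in>types_of_deg (tdeg \<tau>). arr_inv \<sigma> \<tau> *
                (\<Prod>(k, m)\<in>#\<sigma>. of_nat (card {b. deg b = k})))"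
proof -
  interpret monoid_degree deg
    using hom0 hom deg0 fin by unfold_locales
  show ?thesis
    using S_eq_sum_arr_X[OF is_ty] X_eq_sum_arr_inv_S[OF is_ty] card_type_eq_sum_arr_inv[OF is_ty]
    by blast
qed

end
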